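(* Let $k$ be a positive integer and let $G$ be a finite, simple, undirected, connected graph of order at least $4$. (a) If $G$ has a twin equivalence class of cardinality at least $4$, then $O_{R,k}(G)=\mathcal{B}$ for all $k$. (b) If $G$ has two distinct twin equivalence classes of cardinality $3$, then $O_{R,k}(G)=\mathcal{B}$ for all $k$.
   Context: Two vertices $u,w$ of $G$ are twins if $N(u)-\{w\}=N(w)-\{u\}$, where $N(v)$ is the open neighborhood of $v$; this is an equivalence relation on $V(G)$ whose classes are the twin equivalence classes. $d(x,y)$ is the shortest-path distance and $d_k(x,y)=\min\{d(x,y),k+1\}$. A set $S\subseteq V(G)$ is a distance-$k$ resolving set if for all distinct $x,y$ some $z\in S$ has $d_k(x,z)\ne d_k(y,z)$. In the Maker-Breaker distance-$k$ resolving game on $G$, Maker and Breaker alternately select a not-yet-chosen vertex; Maker wins if his selected vertices form a distance-$k$ resolving set, Breaker wins otherwise. $O_{R,k}(G)=\mathcal{M}$ if Maker has a winning strategy whether he moves first or second, $\mathcal{B}$ if Breaker has a winning strategy whether she moves first or second, and $\mathcal{N}$ if the first player has a winning strategy. *)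

theory Defs
  imports Main
begin

definition simple_graph :: "'a set \<Rightarrow> ('a \<Rightarrow> 'a \<Rightarrow> bool) \<Rightarrow> bool" where
  "simple_graph V E \<longleftrightarrow> finite V \<and> (\<forall>x y. E x y \<longrightarrow> x \<in> V \<and> y \<in> V)
     \<and> (\<forall>x y. E x y \<longrightarrow> E y x) \<and> (\<forall>x. \<not> E x x)"

definition walk :: "'a set \<Rightarrow> ('a \<Rightarrow> 'a \<Rightarrow> bool) \<Rightarrow> 'a list \<Rightarrow> bool" where
  "walk V E p \<longleftrightarrow> p \<noteq> [] \<and> set p \<subseteq> V \<and> (\<forall>i. Suc i < length p \<longrightarrow> E (p ! i) (p ! Suc i))"

definition connected_graph :: "'a set \<Rightarrow> ('a \<Rightarrow> 'a \<Rightarrow> bool) \<Rightarrow> bool" where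
  "connected_graph V E \<longleftrightarrow> (\<forall>x\<in>V. \<forall>y\<in>V. \<exists>p. walk V E p \<and> hd p = x \<and> last p = y)"

definition dist :: "'a set \<Rightarrow> ('a \<Rightarrow> 'a \<Rightarrow> bool) \<Rightarrow> 'a \<Rightarrow> 'a \<Rightarrow> nat" where
  "dist V E x y = (LEAST n. \<exists>p. walk V E p \<and> hd p = x \<and> last p = y \<and> length p = Suc n)"

definition dist_k :: "'a set \<Rightarrow> ('a \<Rightarrow> 'a \<Rightarrow> bool) \<Rightarrow> nat \<Rightarrow> 'a \<Rightarrow> 'a \<Rightarrow> nat" where
  "dist_k V E k x y = min (dist V E x y) (k + 1)"

definition resolving_k :: "'a set \<Rightarrow> ('a \<Rightarrow> 'a \<Rightarrow> bool) \<Rightarrow> nat \<Rightarrow> 'a set \<Rightarrow> bool" where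
  "resolving_k V E k S \<longleftrightarrow> S \<subseteq> V \<and>
     (\<forall>x\<in>V. \<forall>y\<in>V. x \<noteq> y \<longrightarrow> (\<exists>z\<in>S. dist_k V E k x z \<noteq> dist_k V E k y z))"

definition nbhd :: "'a set \<Rightarrow> ('a \<Rightarrow> 'a \<Rightarrow> bool) \<Rightarrow> 'a \<Rightarrow> 'a set" where
  "nbhd V E v = {u \<in> V. E v u}"

definition twins :: "'a set \<Rightarrow> ('a \<Rightarrow> 'a \<Rightarrow> bool) \<Rightarrow> 'a \<Rightarrow> 'a \<Rightarrow> bool" where
  "twins V E u w \<longleftrightarrow> nbhd V E u - {w} = nbhd V E w - {u}"

definition twin_class :: "'a set \<Rightarrow> ('a \<Rightarrow> 'a \<Rightarrow> bool) \<Rightarrow> 'a \<Rightarrow> 'a set" where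
  "twin_class V E v = {u \<in> V. twins V E u v}"

text \<open>A position is (M, B): the sets
  of vertices chosen so far by Maker and Breaker; the bool says whether it is
  Maker's turn.\<close>
inductive mwin :: "'a set \<Rightarrow> ('a \<Rightarrow> 'a \<Rightarrow> bool) \<Rightarrow> nat \<Rightarrow> 'a set \<Rightarrow> 'a set \<Rightarrow> bool \<Rightarrow> bool"
  for V E k where
  mwin_end: "V - M - B = {} \<Longrightarrow> resolving_k V E k M \<Longrightarrow> mwin V E k M B t"
| mwin_maker: "v \<in> V - M - B \<Longrightarrow> mwin V E k (insert v M) B False \<Longrightarrow> mwin V E k M B True"
| mwin_breaker: "V - M - B \<noteq> {} \<Longrightarrow> (\<forall>v \<in> V - M - B. mwin V E k M (insert v B) True)
     \<Longrightarrow> mwin V E k M B False"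

inductive bwin :: "'a set \<Rightarrow> ('a \<Rightarrow> 'a \<Rightarrow> bool) \<Rightarrow> nat \<Rightarrow> 'a set \<Rightarrow> 'a set \<Rightarrow> bool \<Rightarrow> bool"
  for V E k where
  bwin_end: "V - M - B = {} \<Longrightarrow> \<not> resolving_k V E k M \<Longrightarrow> bwin V E k M B t"
| bwin_maker: "V - M - B \<noteq> {} \<Longrightarrow> (\<forall>v \<in> V - M - B. bwin V E k (insert v M) B False)
     \<Longrightarrow> bwin V E k M B True"
| bwin_breaker: "v \<in> V - M - B \<Longrightarrow> bwin V E k M (insert v B) True \<Longrightarrow> bwin V E k M B False"

datatype outcome = Outcome_M | Outcome_B | Outcome_N

definition outcome_Rk :: "'a set \<Rightarrow> ('a \<Rightarrow> 'a \<Rightarrow> bool) \<Rightarrow> nat \<Rightarrow> outcome" where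
  "outcome_Rk V E k =
     (if mwin V E k {} {} True \<and> mwin V E k {} {} False then Outcome_M
      else if bwin V E k {} {} True \<and> bwin V E k {} {} False then Outcome_B
      else Outcome_N)"

end

(* Two distinct twins x, y are at the same distance from every other vertex, so every
   distance-k resolving set contains one of them: Breaker wins as soon as she owns two twins
   that Maker does not own. With three mutual twins still free and Breaker to move, she takes
   one of them and answers Maker's next move by taking a second. Under either hypothesis,
   whatever vertex Maker takes first, some twin class still has three free vertices, so
   Breaker wins whoever starts. *)
theory Submission imports Defs begin

lemma twins_iff:
  assumes "simple_graph V E"
  shows "twins V E x y \<longleftrightarrow> (\<forall>w. w \<noteq> x \<longrightarrow> w \<noteq> y \<longrightarrow> E x w = E y w)"
proof -
  have "\<not> E v v" and "E v w \<Longrightarrow> w \<in> V" for v w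
    using assms unfolding simple_graph_def by blast+
  then show ?thesis
    unfolding twins_def nbhd_def set_eq_iff by (auto; metis)
qed

lemma twins_sym: "twins V E x y \<Longrightarrow> twins V E y x"
  unfolding twins_def by auto

lemma twins_trans:
  assumes sg: "simple_graph V E" and xy: "twins V E x y" and yz: "twins V E y z"
  shows "twins V E x z"
proof (cases "x = z")
  case False
  have sym: "E a b = E b a" for a b
    using sg unfolding simple_graph_def by blast
  have "E x w = E z w" if "w \<noteq> x" "w \<noteq> z" for w
  proof (cases "w = y")
    case True
    with that have "x \<noteq> y" "y \<noteq> z" by auto
    have "E x y = E y x" by (rule sym)
    also have "\<dots> = E z x"
      using yz \<open>x \<noteq> y\<close> False unfolding twins_iff[OF sg] by auto
    also have "\<dots> = E x z" by (rule sym)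
    also have "\<dots> = E y z"
      using xy \<open>y \<noteq> z\<close> False unfolding twins_iff[OF sg] by auto
    also have "\<dots> = E z y" by (rule sym)
    finally show ?thesis using True by simp
  next
    case False
    then show ?thesis using xy yz that unfolding twins_iff[OF sg] by auto
  qed
  then show ?thesis by (simp add: twins_iff[OF sg])
qed (simp add: twins_def)

lemma twins_if_in_twin_class:
  assumes sg: "simple_graph V E" and "x \<in> twin_class V E u" "y \<in> twin_class V E u"
  shows "twins V E x y"
proof -
  have "twins V E x u" "twins V E y u"
    using assms(2,3) unfolding twin_class_def by auto
  then show ?thesis using twins_trans[OF sg] twins_sym by metis
qed

lemma twin_class_disjoint:
  assumes sg: "simple_graph V E" and ne: "twin_class V E u \<noteq> twin_class V E v"
  shows "twin_class V E u \<inter> twin_class V E v = {}"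
proof (rule ccontr)
  assume "twin_class V E u \<inter> twin_class V E v \<noteq> {}"
  then obtain w where "twins V E w u" "twins V E w v"
    unfolding twin_class_def by auto
  then have uv: "twins V E u v" using twins_trans[OF sg] twins_sym by metis
  have "twins V E x u \<longleftrightarrow> twins V E x v" for x
    using twins_trans[OF sg _ uv] twins_trans[OF sg _ twins_sym[OF uv]] by blast
  then have "twin_class V E u = twin_class V E v"
    unfolding twin_class_def by simp
  with ne show False ..
qed

lemma walk_Cons_iff:
  "p \<noteq> [] \<Longrightarrow> walk V E (x # p) \<longleftrightarrow> x \<in> V \<and> E x (hd p) \<and> walk V E p"
  unfolding walk_def
  by (auto simp: hd_conv_nth nth_Cons split: nat.splits)

lemma dist_le_length_walk:
  "walk V E p \<Longrightarrow> hd p = x \<Longrightarrow> last p = z \<Longrightarrow> length p = Suc n \<Longrightarrow> dist V E x z \<le> n"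
  unfolding dist_def by (rule Least_le) blast

lemma shortest_walk_exists:
  assumes "connected_graph V E" "x \<in> V" "z \<in> V"
  obtains p where "walk V E p" "hd p = x" "last p = z" "length p = Suc (dist V E x z)"
proof -
  obtain p where p: "walk V E p" "hd p = x" "last p = z"
    using assms unfolding connected_graph_def by blast
  then have "length p = Suc (length p - 1)"
    unfolding walk_def by (cases p) auto
  with p have "\<exists>n q. walk V E q \<and> hd q = x \<and> last q = z \<and> length q = Suc n"
    by blast
  from LeastI_ex[OF this] show ?thesis
    using that unfolding dist_def by blast
qed

text \<open>A shortest walk from x to z starts with an edge x w; if w = y it already passes
  through y, otherwise y w is an edge too and y can replace x.\<close>
lemma dist_twin_le:
  assumes sg: "simple_graph V E" and conn: "connected_graph V E" and tw: "twins V E x y"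
    and V: "x \<in> V" "y \<in> V" "z \<in> V" and ne: "z \<noteq> x" "z \<noteq> y"
  shows "dist V E y z \<le> dist V E x z"
proof -
  obtain q where q: "walk V E q" "hd q = x" "last q = z" "length q = Suc (dist V E x z)"
    using shortest_walk_exists[OF conn V(1,3)] .
  define p where "p = tl q"
  have qp: "q = x # p"
    using q(1,2) unfolding walk_def p_def by (cases q) auto
  have "p \<noteq> []" using q(3) ne(1) qp by auto
  then have p: "walk V E p" "E x (hd p)" "last p = z" "length p = dist V E x z"
    using q walk_Cons_iff[OF \<open>p \<noteq> []\<close>] unfolding qp by auto
  show ?thesis
  proof (cases "hd p = y")
    case True
    have "length p = Suc (length p - 1)" using \<open>p \<noteq> []\<close> by simp
    then have "dist V E y z \<le> length p - 1"
      by (rule dist_le_length_walk[OF p(1) True p(3)])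
    then show ?thesis using p(4) by simp
  next
    case False
    have "hd p \<noteq> x" using p(2) sg unfolding simple_graph_def by auto
    then have "E y (hd p)"
      using p(2) False tw unfolding twins_iff[OF sg] by auto
    then have "walk V E (y # p)" using p(1) V(2) walk_Cons_iff[OF \<open>p \<noteq> []\<close>] by simp
    moreover have "last (y # p) = z" using p(3) \<open>p \<noteq> []\<close> by simp
    ultimately show ?thesis
      using dist_le_length_walk[of V E "y # p" y z "dist V E x z"] p(4) by simp
  qed
qed

lemma resolving_k_meets_twins:
  assumes sg: "simple_graph V E" and conn: "connected_graph V E"
    and res: "resolving_k V E k S" and tw: "twins V E x y"
    and V: "x \<in> V" "y \<in> V" and ne: "x \<noteq> y"
  shows "x \<in> S \<or> y \<in> S"
proof (rule ccontr)
  assume "\<not> (x \<in> S \<or> y \<in> S)"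
  then have "z \<noteq> x" "z \<noteq> y" if "z \<in> S" for z
    using that by auto
  moreover have "S \<subseteq> V" using res unfolding resolving_k_def by blast
  ultimately have "dist V E x z = dist V E y z" if "z \<in> S" for z
    using that dist_twin_le[OF sg conn tw V] dist_twin_le[OF sg conn twins_sym[OF tw] V(2,1)]
    by (simp add: le_antisym subset_iff)
  moreover obtain z where "z \<in> S" "dist_k V E k x z \<noteq> dist_k V E k y z"
    using res V ne unfolding resolving_k_def by blast
  ultimately show False unfolding dist_k_def by simp
qed

lemma mwin_not_bwin: "mwin V E k M B t \<Longrightarrow> \<not> bwin V E k M B t"
  by (induction rule: mwin.induct) (auto elim: bwin.cases)

lemma bwin_if_no_resolving_completion:
  assumes "finite V"
    and "\<And>M'. M \<subseteq> M' \<Longrightarrow> M' \<subseteq> M \<union> (V - B) \<Longrightarrow> \<not> resolving_k V E k M'"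
  shows "bwin V E k M B t"
  using assms(2)
proof (induction "card (V - M - B)" arbitrary: M B t rule: less_induct)
  case less
  show ?case
  proof (cases "V - M - B = {}")
    case True
    then show ?thesis using less.prems by (intro bwin_end) auto
  next
    case False
    have smaller: "card (V - insert v M - B) < card (V - M - B)"
        "card (V - M - insert v B) < card (V - M - B)" if "v \<in> V - M - B" for v
    proof -
      have "card (V - M - B - {v}) < card (V - M - B)"
        using \<open>finite V\<close> that by (intro card_Diff1_less) auto
      moreover have "V - insert v M - B = V - M - B - {v}" "V - M - insert v B = V - M - B - {v}"
        by auto
      ultimately show "card (V - insert v M - B) < card (V - M - B)"
          "card (V - M - insert v B) < card (V - M - B)"
        by simp_all
    qed
    have "bwin V E k (insert v M) B False" if "v \<in> V - M - B" for v
      using that less.prems by (intro less.hyps[OF smaller(1)[OF that]]) auto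
    then have "bwin V E k M B True" using False by (intro bwin_maker) auto
    moreover obtain v where v: "v \<in> V - M - B" using False by blast
    then have "bwin V E k M (insert v B) True"
      using less.prems by (intro less.hyps[OF smaller(2)[OF v]]) auto
    then have "bwin V E k M B False" using v by (intro bwin_breaker)
    ultimately show ?thesis by (metis (full_types))
  qed
qed

lemma bwin_if_Breaker_owns_twins:
  assumes sg: "simple_graph V E" and conn: "connected_graph V E"
    and tw: "twins V E x y" "x \<noteq> y" "x \<in> V" "y \<in> V"
    and B: "x \<in> B" "y \<in> B" and M: "x \<notin> M" "y \<notin> M"
  shows "bwin V E k M B t"
proof (rule bwin_if_no_resolving_completion)
  show "finite V" using sg unfolding simple_graph_def by blast
  fix M' assume "M \<subseteq> M'" "M' \<subseteq> M \<union> (V - B)"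
  then have "x \<notin> M'" "y \<notin> M'" using B M by auto
  then show "\<not> resolving_k V E k M'"
    using resolving_k_meets_twins[OF sg conn _ tw(1,3,4,2)] by blast
qed

text \<open>Breaker owns x; if Maker takes y she takes z, otherwise she takes y.\<close>
lemma bwin_Maker_to_move_twin_triple:
  assumes sg: "simple_graph V E" and conn: "connected_graph V E"
    and tw: "twins V E x y" "twins V E x z" and ne: "x \<noteq> y" "x \<noteq> z" "y \<noteq> z"
    and V: "x \<in> V" "y \<in> V" "z \<in> V"
    and B: "x \<in> B" "y \<notin> B" "z \<notin> B" and M: "x \<notin> M" "y \<notin> M" "z \<notin> M"
  shows "bwin V E k M B True"
proof (rule bwin_maker)
  show "V - M - B \<noteq> {}" using V M B by blast
  show "\<forall>v\<in>V - M - B. bwin V E k (insert v M) B False"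
  proof
    fix v assume v: "v \<in> V - M - B"
    show "bwin V E k (insert v M) B False"
    proof (cases "v = y")
      case True
      have "bwin V E k (insert v M) (insert z B) True"
        using B M True ne by (intro bwin_if_Breaker_owns_twins[OF sg conn tw(2) ne(2) V(1,3)]) auto
      then show ?thesis using B M V True ne by (intro bwin_breaker[of z]) auto
    next
      case False
      have "bwin V E k (insert v M) (insert y B) True"
        using B M v False by (intro bwin_if_Breaker_owns_twins[OF sg conn tw(1) ne(1) V(1,2)]) auto
      then show ?thesis using B M V v False by (intro bwin_breaker[of y]) auto
    qed
  qed
qed

lemma bwin_Breaker_to_move:
  assumes sg: "simple_graph V E" and conn: "connected_graph V E"
    and free: "3 \<le> card (twin_class V E u - M - B)"
  shows "bwin V E k M B False"
proof -
  obtain x y z where xyz: "x \<in> twin_class V E u - M - B" "y \<in> twin_class V E u - M - B"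
      "z \<in> twin_class V E u - M - B" and ne: "x \<noteq> y" "x \<noteq> z" "y \<noteq> z"
    using free by (auto simp: numeral_eq_Suc card_le_Suc_iff)
  then have tw: "twins V E x y" "twins V E x z"
    using twins_if_in_twin_class[OF sg] by auto
  have V: "x \<in> V" "y \<in> V" "z \<in> V" using xyz unfolding twin_class_def by auto
  have "bwin V E k M (insert x B) True"
    using xyz ne by (intro bwin_Maker_to_move_twin_triple[OF sg conn tw ne V]) auto
  then show ?thesis using xyz V by (intro bwin_breaker[of x]) auto
qed

lemma outcome_Rk_eq_B_if_twin_triples:
  assumes sg: "simple_graph V E" and conn: "connected_graph V E"
    and triple: "3 \<le> card (twin_class V E u)"
    and triple_avoiding: "\<And>v. v \<in> V \<Longrightarrow> \<exists>w. 3 \<le> card (twin_class V E w - {v})"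
  shows "outcome_Rk V E k = Outcome_B"
proof -
  have "bwin V E k {} {} False"
    using triple by (intro bwin_Breaker_to_move[OF sg conn]) auto
  moreover have "bwin V E k {} {} True"
  proof (rule bwin_maker)
    have "twin_class V E u \<noteq> {}" using triple by auto
    then show "V - {} - {} \<noteq> {}" unfolding twin_class_def by auto
    show "\<forall>v\<in>V - {} - {}. bwin V E k (insert v {}) {} False"
    proof
      fix v assume "v \<in> V - {} - {}"
      then obtain w where "3 \<le> card (twin_class V E w - {v})"
        using triple_avoiding by auto
      then show "bwin V E k (insert v {}) {} False"
        by (intro bwin_Breaker_to_move[OF sg conn, of w]) simp
    qed
  qed
  ultimately show ?thesis
    using mwin_not_bwin[of V E k "{}" "{}" True] unfolding outcome_Rk_def by auto
qed

theorem corollary2p8: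
  fixes V :: "'a set" and E :: "'a \<Rightarrow> 'a \<Rightarrow> bool" and k :: nat
  assumes "simple_graph V E" and "connected_graph V E" and "card V \<ge> 4" and "k \<ge> 1"
  shows "((\<exists>v\<in>V. card (twin_class V E v) \<ge> 4) \<longrightarrow> outcome_Rk V E k = Outcome_B)
       \<and> ((\<exists>u\<in>V. \<exists>v\<in>V. twin_class V E u \<noteq> twin_class V E v
             \<and> card (twin_class V E u) = 3 \<and> card (twin_class V E v) = 3)
          \<longrightarrow> outcome_Rk V E k = Outcome_B)"
proof -
  note sg = assms(1) and conn = assms(2)
  have part_a: "outcome_Rk V E k = Outcome_B" if a: "\<exists>v\<in>V. card (twin_class V E v) \<ge> 4"
  proof -
    obtain u where u: "4 \<le> card (twin_class V E u)" using a by blast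
    then have "3 \<le> card (twin_class V E u - {v})" for v
      by (auto simp: card_Diff_singleton_if)
    with u show ?thesis by (intro outcome_Rk_eq_B_if_twin_triples[OF sg conn, of u]) auto
  qed
  have part_b: "outcome_Rk V E k = Outcome_B"
    if b: "\<exists>u\<in>V. \<exists>v\<in>V. twin_class V E u \<noteq> twin_class V E v
          \<and> card (twin_class V E u) = 3 \<and> card (twin_class V E v) = 3"
  proof -
    obtain u w where uw: "twin_class V E u \<noteq> twin_class V E w"
        "card (twin_class V E u) = 3" "card (twin_class V E w) = 3"
      using b by blast
    have "\<exists>x. 3 \<le> card (twin_class V E x - {v})" for v
    proof (cases "v \<in> twin_class V E u")
      case True
      then have "v \<notin> twin_class V E w" using twin_class_disjoint[OF sg uw(1)] by blast
      then show ?thesis using uw(3) by (intro exI[of _ w]) simp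
    qed (use uw(2) in \<open>intro exI[of _ u], simp\<close>)
    with uw(2) show ?thesis by (intro outcome_Rk_eq_B_if_twin_triples[OF sg conn, of u]) auto
  qed
  show ?thesis using part_a part_b by blast
qed

end
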